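(* Let $(X,d)$ be a geodesic length space that is a proper metric space, $I\subseteq\mathbb{R}$ an open interval and $f:I\to(0,\infty)$ continuous. Then the generalized cone $I\times_f X$ is globally hyperbolic.
   Context: $Y=I\times_f X$ is the set $I\times X$ with metric $D((t,x),(t',x'))=|t-t'|+d(x,x')$. A curve $\gamma=(\alpha,\beta)$ is causal if $D$-absolutely continuous, $\alpha$ strictly monotone and $-\dot\alpha^2+(f\circ\alpha)^2v_\beta^2\le0$ a.e. ($v_\beta$ the metric derivative of $\beta$), future directed if $\dot\alpha>0$ a.e.; $y\le y'$ iff $y=y'$ or there is a future directed causal curve from $y$ to $y'$. Causal diamonds: $J(p,q)=\{r: p\le r\le q\}$. Global hyperbolicity (for Lorentzian pre-length spaces, in the sense of Kunzinger–Sämann): the space is non-totally imprisoning (for every compact set $K$ there is $C>0$ such that the $D$-length of every causal curve contained in $K$ is at most $C$) and $J(p,q)$ is compact for all $p,q$. *)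

theory Defs
  imports "HOL-Analysis.Analysis"
begin

definition curve_length :: "('b \<Rightarrow> 'b \<Rightarrow> real) \<Rightarrow> (real \<Rightarrow> 'b) \<Rightarrow> real \<Rightarrow> real \<Rightarrow> ereal" where
  "curve_length dd g a b =
     (SUP P \<in> {(n, t). t 0 = a \<and> t n = b \<and> (\<forall>i<n. t i \<le> t (Suc i))}.
        ereal (\<Sum>i<fst P. dd (g (snd P i)) (g (snd P (Suc i)))))"

definition abs_cont_metric :: "('b \<Rightarrow> 'b \<Rightarrow> real) \<Rightarrow> (real \<Rightarrow> 'b) \<Rightarrow> real \<Rightarrow> real \<Rightarrow> bool" where
  "abs_cont_metric dd g a b \<longleftrightarrow>
     (\<forall>\<epsilon>>0. \<exists>\<delta>>0. \<forall>(n::nat) (s::nat \<Rightarrow> real) (t::nat \<Rightarrow> real).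
        (\<forall>i<n. a \<le> s i \<and> s i \<le> t i \<and> t i \<le> b) \<and>
        (\<forall>i<n. \<forall>j<n. i \<noteq> j \<longrightarrow> t i \<le> s j \<or> t j \<le> s i) \<and>
        (\<Sum>i<n. t i - s i) < \<delta>
        \<longrightarrow> (\<Sum>i<n. dd (g (s i)) (g (t i))) < \<epsilon>)"

definition has_metric_derivative :: "(real \<Rightarrow> 'a::metric_space) \<Rightarrow> real \<Rightarrow> real \<Rightarrow> bool" where
  "has_metric_derivative \<beta> v t \<longleftrightarrow>
     ((\<lambda>s. dist (\<beta> s) (\<beta> t) / \<bar>s - t\<bar>) \<longlongrightarrow> v) (at t)"

definition proper_metric_space :: "'a::metric_space itself \<Rightarrow> bool" where
  "proper_metric_space _ \<longleftrightarrow> (\<forall>(x::'a) r. compact (cball x r))"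

definition length_space :: "'a::metric_space itself \<Rightarrow> bool" where
  "length_space _ \<longleftrightarrow> (\<forall>x y::'a. ereal (dist x y) =
      (INF \<gamma> \<in> {\<gamma>. continuous_on {0..1} \<gamma> \<and> \<gamma> 0 = x \<and> \<gamma> 1 = y}. curve_length dist \<gamma> 0 1))"

definition geodesic_space :: "'a::metric_space itself \<Rightarrow> bool" where
  "geodesic_space _ \<longleftrightarrow> (\<forall>x y::'a. \<exists>\<gamma>. continuous_on {0..1} \<gamma> \<and> \<gamma> 0 = x \<and> \<gamma> 1 = y \<and>
      curve_length dist \<gamma> 0 1 = ereal (dist x y))"

definition cone_space :: "real set \<Rightarrow> (real \<times> 'a) set" where
  "cone_space I = I \<times> UNIV"

definition cone_dist :: "real \<times> 'a::metric_space \<Rightarrow> real \<times> 'a \<Rightarrow> real" where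
  "cone_dist y y' = \<bar>fst y - fst y'\<bar> + dist (snd y) (snd y')"

definition causal_curve :: "real set \<Rightarrow> (real \<Rightarrow> real) \<Rightarrow> (real \<Rightarrow> real \<times> 'a::metric_space) \<Rightarrow> real \<Rightarrow> real \<Rightarrow> bool" where
  "causal_curve I f \<gamma> a b \<longleftrightarrow>
     a < b \<and> \<gamma> ` {a..b} \<subseteq> cone_space I \<and>
     abs_cont_metric cone_dist \<gamma> a b \<and>
     (strict_mono_on {a..b} (fst \<circ> \<gamma>) \<or> strict_mono_on {a..b} (\<lambda>t. - fst (\<gamma> t))) \<and>
     (AE t in lebesgue. t \<in> {a..b} \<longrightarrow>
        (\<exists>da v. ((fst \<circ> \<gamma>) has_real_derivative da) (at t) \<and>
               has_metric_derivative (snd \<circ> \<gamma>) v t \<and>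
               - (da\<^sup>2) + (f (fst (\<gamma> t)))\<^sup>2 * v\<^sup>2 \<le> 0))"

definition future_directed :: "(real \<Rightarrow> real \<times> 'a) \<Rightarrow> real \<Rightarrow> real \<Rightarrow> bool" where
  "future_directed \<gamma> a b \<longleftrightarrow>
     (AE t in lebesgue. t \<in> {a..b} \<longrightarrow>
        (\<exists>da. ((fst \<circ> \<gamma>) has_real_derivative da) (at t) \<and> da > 0))"

definition causal_le :: "real set \<Rightarrow> (real \<Rightarrow> real) \<Rightarrow> real \<times> 'a::metric_space \<Rightarrow> real \<times> 'a \<Rightarrow> bool" where
  "causal_le I f y y' \<longleftrightarrow>
     (y \<in> cone_space I \<and> y = y') \<or>
     (\<exists>\<gamma> a b. causal_curve I f \<gamma> a b \<and> future_directed \<gamma> a b \<and> \<gamma> a = y \<and> \<gamma> b = y')"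

definition causal_diamond :: "real set \<Rightarrow> (real \<Rightarrow> real) \<Rightarrow> real \<times> 'a::metric_space \<Rightarrow> real \<times> 'a \<Rightarrow> (real \<times> 'a) set" where
  "causal_diamond I f p q = {r. causal_le I f p r \<and> causal_le I f r q}"

definition cone_topology :: "real set \<Rightarrow> (real \<times> 'a::metric_space) topology" where
  "cone_topology I = Metric_space.mtopology (cone_space I) cone_dist"

definition non_totally_imprisoning :: "real set \<Rightarrow> (real \<Rightarrow> real) \<Rightarrow> 'a::metric_space itself \<Rightarrow> bool" where
  "non_totally_imprisoning I f _ \<longleftrightarrow>
     (\<forall>K::(real \<times> 'a) set. compactin (cone_topology I) K \<longrightarrow>
        (\<exists>C>0. \<forall>\<gamma> a b. causal_curve I f \<gamma> a b \<and> \<gamma> ` {a..b} \<subseteq> K \<longrightarrow>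
                 curve_length cone_dist \<gamma> a b \<le> ereal C))"

definition globally_hyperbolic :: "real set \<Rightarrow> (real \<Rightarrow> real) \<Rightarrow> 'a::metric_space itself \<Rightarrow> bool" where
  "globally_hyperbolic I f X \<longleftrightarrow>
     non_totally_imprisoning I f X \<and>
     (\<forall>p q::real \<times> 'a. p \<in> cone_space I \<and> q \<in> cone_space I \<longrightarrow>
        compactin (cone_topology I) (causal_diamond I f p q))"

end

(*
  Write a causal curve as (alpha, beta). Causality says that the metric speed of beta is at most
  |alpha'| / f(alpha). Let F be an optical time, F' = 1/f. Integrating the speed bound along
  future directed curves, and conversely running along a geodesic of X at the speed of light,
  shows that p <= r holds iff fst p <= fst r and d(snd p, snd r) <= F(fst r) - F(fst p). The
  integration step is a monotonicity criterion for absolutely continuous functions whose right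
  Dini derivative is nonpositive outside a null set. Hence the causal diamond J(p,q) is a closed
  subset of [fst p, fst q] times a closed ball of X, which is compact because X is proper.
  Non-total imprisonment: on a compact set K, f is bounded below by some m > 0, so the D-length
  of a causal curve in K is at most (1 + 1/m) times the oscillation of the time coordinate on K.
*)

theory Submission
  imports Defs
begin

section \<open>Absolutely continuous maps\<close>

definition nonoverlapping_subintervals ::
    "real \<Rightarrow> real \<Rightarrow> nat \<Rightarrow> (nat \<Rightarrow> real) \<Rightarrow> (nat \<Rightarrow> real) \<Rightarrow> bool" where
  "nonoverlapping_subintervals a b n s t \<longleftrightarrow>
     (\<forall>i<n. a \<le> s i \<and> s i \<le> t i \<and> t i \<le> b) \<and>
     (\<forall>i<n. \<forall>j<n. i \<noteq> j \<longrightarrow> t i \<le> s j \<or> t j \<le> s i)"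

lemma abs_cont_metric_iff:
  "abs_cont_metric dd g a b \<longleftrightarrow>
     (\<forall>\<epsilon>>0. \<exists>\<delta>>0. \<forall>n s t. nonoverlapping_subintervals a b n s t \<and> (\<Sum>i<n. t i - s i) < \<delta>
        \<longrightarrow> (\<Sum>i<n. dd (g (s i)) (g (t i))) < \<epsilon>)"
  unfolding abs_cont_metric_def nonoverlapping_subintervals_def by (simp add: conj_assoc)

lemma abs_cont_metricE:
  assumes "abs_cont_metric dd g a b" "\<epsilon> > 0"
  obtains \<delta> where "\<delta> > 0"
    "\<And>n s t. nonoverlapping_subintervals a b n s t \<Longrightarrow> (\<Sum>i<n. t i - s i) < \<delta> \<Longrightarrow>
       (\<Sum>i<n. dd (g (s i)) (g (t i))) < \<epsilon>"
  using assms unfolding abs_cont_metric_iff by meson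

lemma nonoverlapping_subintervals_mono:
  "nonoverlapping_subintervals a b n s t \<Longrightarrow> a' \<le> a \<Longrightarrow> b \<le> b' \<Longrightarrow>
   nonoverlapping_subintervals a' b' n s t"
  unfolding nonoverlapping_subintervals_def by (meson order_trans)

lemma nonoverlapping_subintervals_snoc:
  assumes "nonoverlapping_subintervals a s n ss tt" "a \<le> s" "s \<le> u"
  shows "nonoverlapping_subintervals a u (Suc n) (ss(n := s)) (tt(n := u))"
  using assms unfolding nonoverlapping_subintervals_def
  by (auto simp: less_Suc_eq)

lemma abs_cont_metric_transfer:
  assumes ac: "abs_cont_metric dd g a' b'" and sub: "a' \<le> a" "b \<le> b'" and L: "L \<ge> 0"
    and le: "\<And>u w. u \<in> {a..b} \<Longrightarrow> w \<in> {a..b} \<Longrightarrow> ee (h u) (h w) \<le> L * dd (g u) (g w)"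
  shows "abs_cont_metric ee h a b"
  unfolding abs_cont_metric_iff
proof (intro allI impI)
  fix \<epsilon> :: real assume "\<epsilon> > 0"
  then obtain \<delta> where "\<delta> > 0" and \<delta>: "\<And>n s t. nonoverlapping_subintervals a' b' n s t \<Longrightarrow>
      (\<Sum>i<n. t i - s i) < \<delta> \<Longrightarrow> (\<Sum>i<n. dd (g (s i)) (g (t i))) < \<epsilon> / (L + 1)"
    using abs_cont_metricE[OF ac, of "\<epsilon> / (L + 1)"] L by auto
  have "(\<Sum>i<n. ee (h (s i)) (h (t i))) < \<epsilon>"
    if st: "nonoverlapping_subintervals a b n s t" "(\<Sum>i<n. t i - s i) < \<delta>" for n s t
  proof -
    have "(\<Sum>i<n. ee (h (s i)) (h (t i))) \<le> L * (\<Sum>i<n. dd (g (s i)) (g (t i)))"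
      unfolding sum_distrib_left using st(1)
      by (intro sum_mono le) (auto simp: nonoverlapping_subintervals_def)
    also have "\<dots> \<le> L * (\<epsilon> / (L + 1))"
      using \<delta>[OF nonoverlapping_subintervals_mono[OF st(1) sub] st(2)] L by (intro mult_left_mono) auto
    also have "\<dots> < \<epsilon>"
      using L \<open>\<epsilon> > 0\<close> by (simp add: field_simps)
    finally show ?thesis .
  qed
  then show "\<exists>\<delta>>0. \<forall>n s t. nonoverlapping_subintervals a b n s t \<and> (\<Sum>i<n. t i - s i) < \<delta> \<longrightarrow>
      (\<Sum>i<n. ee (h (s i)) (h (t i))) < \<epsilon>"
    using \<open>\<delta> > 0\<close> by blast
qed

lemma abs_cont_metric_dominated:
  assumes ac1: "abs_cont_metric dd1 g1 a b" and ac2: "abs_cont_metric dd2 g2 a b"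
    and le: "\<And>u w. u \<in> {a..b} \<Longrightarrow> w \<in> {a..b} \<Longrightarrow>
               ee (h u) (h w) \<le> dd1 (g1 u) (g1 w) + dd2 (g2 u) (g2 w)"
  shows "abs_cont_metric ee h a b"
  unfolding abs_cont_metric_iff
proof (intro allI impI)
  fix \<epsilon> :: real assume "\<epsilon> > 0"
  then have "\<epsilon> / 2 > 0" by simp
  obtain \<delta>1 where "\<delta>1 > 0" and \<delta>1: "\<And>n s t. nonoverlapping_subintervals a b n s t \<Longrightarrow>
      (\<Sum>i<n. t i - s i) < \<delta>1 \<Longrightarrow> (\<Sum>i<n. dd1 (g1 (s i)) (g1 (t i))) < \<epsilon> / 2"
    using abs_cont_metricE[OF ac1 \<open>\<epsilon> / 2 > 0\<close>] by blast
  obtain \<delta>2 where "\<delta>2 > 0" and \<delta>2: "\<And>n s t. nonoverlapping_subintervals a b n s t \<Longrightarrow>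
      (\<Sum>i<n. t i - s i) < \<delta>2 \<Longrightarrow> (\<Sum>i<n. dd2 (g2 (s i)) (g2 (t i))) < \<epsilon> / 2"
    using abs_cont_metricE[OF ac2 \<open>\<epsilon> / 2 > 0\<close>] by blast
  have "(\<Sum>i<n. ee (h (s i)) (h (t i))) < \<epsilon>"
    if st: "nonoverlapping_subintervals a b n s t" "(\<Sum>i<n. t i - s i) < min \<delta>1 \<delta>2" for n s t
  proof -
    have "(\<Sum>i<n. ee (h (s i)) (h (t i))) \<le>
        (\<Sum>i<n. dd1 (g1 (s i)) (g1 (t i))) + (\<Sum>i<n. dd2 (g2 (s i)) (g2 (t i)))"
      unfolding sum.distrib[symmetric] using st(1)
      by (intro sum_mono le) (auto simp: nonoverlapping_subintervals_def)
    also have "\<dots> < \<epsilon> / 2 + \<epsilon> / 2"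
      using st by (intro add_strict_mono \<delta>1 \<delta>2) auto
    finally show ?thesis by simp
  qed
  then show "\<exists>\<delta>>0. \<forall>n s t. nonoverlapping_subintervals a b n s t \<and> (\<Sum>i<n. t i - s i) < \<delta> \<longrightarrow>
      (\<Sum>i<n. ee (h (s i)) (h (t i))) < \<epsilon>"
    using \<open>\<delta>1 > 0\<close> \<open>\<delta>2 > 0\<close> by (intro exI[of _ "min \<delta>1 \<delta>2"]) auto
qed

lemma abs_cont_metric_ident: "abs_cont_metric dist (\<lambda>x::real. x) a b"
  unfolding abs_cont_metric_iff
proof (intro allI impI)
  fix \<epsilon> :: real assume "\<epsilon> > 0"
  have "(\<Sum>i<n. dist (s i) (t i)) < \<epsilon>"
    if st: "nonoverlapping_subintervals a b n s t" "(\<Sum>i<n. t i - s i) < \<epsilon>" for n s t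
  proof -
    have "(\<Sum>i<n. dist (s i) (t i)) = (\<Sum>i<n. t i - s i)"
      using st(1) by (intro sum.cong) (auto simp: nonoverlapping_subintervals_def dist_real_def)
    with st(2) show ?thesis by simp
  qed
  with \<open>\<epsilon> > 0\<close> show "\<exists>\<delta>>0. \<forall>n s t. nonoverlapping_subintervals a b n s t \<and>
      (\<Sum>i<n. t i - s i) < \<delta> \<longrightarrow> (\<Sum>i<n. dist (s i) (t i)) < \<epsilon>"
    by blast
qed

lemma abs_cont_metric_imp_continuous_on:
  fixes g :: "real \<Rightarrow> 'a::metric_space"
  assumes "abs_cont_metric dist g a b"
  shows "continuous_on {a..b} g"
  unfolding continuous_on_iff
proof (intro ballI allI impI)
  fix x e :: real assume x: "x \<in> {a..b}" and "e > 0"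
  then obtain d where "d > 0" and d: "\<And>n s t. nonoverlapping_subintervals a b n s t \<Longrightarrow>
      (\<Sum>i<n. t i - s i) < d \<Longrightarrow> (\<Sum>i<n. dist (g (s i)) (g (t i))) < e"
    using abs_cont_metricE[OF assms] by metis
  have "dist (g y) (g x) < e" if "y \<in> {a..b}" "dist y x < d" for y
  proof -
    have "nonoverlapping_subintervals a b 1 (\<lambda>_. min x y) (\<lambda>_. max x y)"
      using x that(1) by (auto simp: nonoverlapping_subintervals_def)
    from d[OF this] that(2) show ?thesis
      by (cases "x \<le> y") (auto simp: dist_real_def dist_commute min_def max_def)
  qed
  with \<open>d > 0\<close> show "\<exists>d>0. \<forall>y\<in>{a..b}. dist y x < d \<longrightarrow> dist (g y) (g x) < e" by blast
qed

section \<open>A monotonicity criterion\<close>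

lemma null_set_open_cover:
  assumes N: "N \<in> null_sets lebesgue" and "\<delta> > 0"
  obtains U :: "real set" where "open U" "N \<subseteq> U" "U \<in> lmeasurable" "measure lebesgue U < \<delta>"
proof -
  obtain U where U: "open U" "N \<subseteq> U" "U - N \<in> lmeasurable" "emeasure lebesgue (U - N) < ennreal \<delta>"
    using sets_lebesgue_outer_open[OF null_setsD2[OF N] \<open>\<delta> > 0\<close>] by blast
  have N': "N \<in> lmeasurable"
    using N by (simp add: fmeasurableI_null_sets)
  have U_eq: "U = (U - N) \<union> N"
    using U(2) by blast
  then have "U \<in> lmeasurable"
    using U(3) N' by (metis fmeasurable.Un)
  moreover have "measure lebesgue U < \<delta>"
  proof -
    have "measure lebesgue U \<le> measure lebesgue (U - N) + measure lebesgue N"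
      using U_eq U(3) N' by (metis measure_Un_le fmeasurableD)
    moreover have "measure lebesgue (U - N) < \<delta>"
      using U(3,4) by (metis emeasure_eq_measure2 ennreal_less_iff measure_nonneg)
    moreover have "measure lebesgue N = 0"
      using N by (simp add: measure_eq_0_null_sets)
    ultimately show ?thesis by linarith
  qed
  ultimately show thesis
    using that U(1,2) by blast
qed

lemma sum_lengths_le_measure:
  assumes st: "nonoverlapping_subintervals a b n s t" and U: "\<And>i. i < n \<Longrightarrow> {s i..t i} \<subseteq> U"
    and "U \<in> lmeasurable"
  shows "(\<Sum>i<n. t i - s i) \<le> measure lebesgue U"
proof -
  have "negligible ({s i..t i} \<inter> {s j..t j})" if "i < n" "j < n" "i \<noteq> j" for i j
  proof -
    have "{s i..t i} \<inter> {s j..t j} \<subseteq> {t i, t j}"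
      using st that unfolding nonoverlapping_subintervals_def by fastforce
    then show ?thesis
      by (meson negligible_insert negligible_sing negligible_subset)
  qed
  then have "measure lebesgue (\<Union>i<n. {s i..t i}) = (\<Sum>i<n. measure lebesgue {s i..t i})"
    by (intro measure_negligible_finite_Union_image) (auto simp: pairwise_def)
  also have "\<dots> = (\<Sum>i<n. t i - s i)"
    using st unfolding nonoverlapping_subintervals_def by (intro sum.cong) auto
  finally have "measure lebesgue (\<Union>i<n. {s i..t i}) = (\<Sum>i<n. t i - s i)" .
  moreover have "measure lebesgue (\<Union>i<n. {s i..t i}) \<le> measure lebesgue U"
    using U by (intro measure_mono_fmeasurable \<open>U \<in> lmeasurable\<close>) auto
  ultimately show ?thesis by simp
qed

lemma real_interval_induct:
  fixes a b :: real
  assumes "a \<le> b" and "P a"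
    and left: "\<And>s. a < s \<Longrightarrow> s \<le> b \<Longrightarrow> (\<And>u. a \<le> u \<Longrightarrow> u < s \<Longrightarrow> P u) \<Longrightarrow> P s"
    and right: "\<And>s. a \<le> s \<Longrightarrow> s < b \<Longrightarrow> (\<And>u. a \<le> u \<Longrightarrow> u \<le> s \<Longrightarrow> P u) \<Longrightarrow>
                  \<exists>u>s. \<forall>w. s < w \<and> w \<le> u \<longrightarrow> P w"
  shows "P b"
proof -
  define A where "A = {s \<in> {a..b}. \<forall>u. a \<le> u \<and> u \<le> s \<longrightarrow> P u}"
  define s where "s = Sup A"
  have "a \<in> A"
    using assms(1,2) unfolding A_def by auto
  have "bdd_above A"
    unfolding A_def by (auto intro: bdd_aboveI[of _ b])
  have "a \<le> s" "s \<le> b"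
    unfolding s_def using \<open>a \<in> A\<close> \<open>bdd_above A\<close> by (auto intro: cSup_upper cSup_least simp: A_def)
  have below: "P u" if "a \<le> u" "u < s" for u
  proof -
    obtain x where "x \<in> A" "u < x"
      using \<open>u < s\<close> less_cSup_iff[of A u] \<open>a \<in> A\<close> \<open>bdd_above A\<close> unfolding s_def by blast
    with that show ?thesis
      unfolding A_def by auto
  qed
  have "P s"
    using \<open>a \<le> s\<close> \<open>s \<le> b\<close> below left \<open>P a\<close> by (cases "a = s") auto
  then have upto_s: "P u" if "a \<le> u" "u \<le> s" for u
    using below that by (cases "u = s") auto
  show "P b"
  proof (cases "s < b")
    case True
    then obtain u where "u > s" and u: "\<And>w. s < w \<Longrightarrow> w \<le> u \<Longrightarrow> P w"
      using right[OF \<open>a \<le> s\<close> _ upto_s] by blast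
    have "P w" if "a \<le> w" "w \<le> min u b" for w
      using upto_s[of w] u[of w] that by (cases "w \<le> s") auto
    then have "min u b \<in> A"
      unfolding A_def using \<open>a \<le> s\<close> \<open>u > s\<close> True by auto
    then have "min u b \<le> s"
      unfolding s_def using \<open>bdd_above A\<close> by (rule cSup_upper)
    with \<open>u > s\<close> True show ?thesis by simp
  next
    case False
    with \<open>s \<le> b\<close> \<open>P s\<close> show ?thesis by simp
  qed
qed

text \<open>The invariant of the continuity induction in \<open>abs_cont_right_dini_le\<close> below, where \<open>U\<close>
  covers the exceptional null set.\<close>
definition slope_jump_bound :: "(real \<Rightarrow> real) \<Rightarrow> real set \<Rightarrow> real \<Rightarrow> real \<Rightarrow> real \<Rightarrow> bool" where
  "slope_jump_bound g U \<eta> a s \<longleftrightarrow> (\<forall>e>0. \<exists>n ss tt.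
     nonoverlapping_subintervals a s n ss tt \<and> (\<forall>i<n. {ss i..tt i} \<subseteq> U) \<and>
     g s \<le> g a + \<eta> * (s - a) + (\<Sum>i<n. \<bar>g (tt i) - g (ss i)\<bar>) + e)"

lemma slope_jump_bound_refl: "slope_jump_bound g U \<eta> a a"
  unfolding slope_jump_bound_def
  by (intro allI impI exI[of _ 0]) (auto simp: nonoverlapping_subintervals_def)

lemma slope_jump_bound_left_closed:
  assumes g: "continuous_on {a..b} g" and "\<eta> \<ge> 0" "a < s" "s \<le> b"
    and below: "\<And>u. a \<le> u \<Longrightarrow> u < s \<Longrightarrow> slope_jump_bound g U \<eta> a u"
  shows "slope_jump_bound g U \<eta> a s"
  unfolding slope_jump_bound_def
proof (intro allI impI)
  fix e :: real assume "e > 0"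
  have "\<forall>\<epsilon>>0. \<exists>\<delta>>0. \<forall>u\<in>{a..b}. dist u s < \<delta> \<longrightarrow> dist (g u) (g s) < \<epsilon>"
    using g \<open>a < s\<close> \<open>s \<le> b\<close> unfolding continuous_on_iff by simp
  then obtain d where "d > 0" and d: "\<And>u. u \<in> {a..b} \<Longrightarrow> dist u s < d \<Longrightarrow> dist (g u) (g s) < e / 2"
    using \<open>e > 0\<close> by (meson half_gt_zero)
  define u where "u = max a (s - d / 2)"
  have u: "a \<le> u" "u < s" "dist u s < d"
    using \<open>d > 0\<close> \<open>a < s\<close> unfolding u_def dist_real_def by auto
  then obtain n ss tt where fam: "nonoverlapping_subintervals a u n ss tt" "\<forall>i<n. {ss i..tt i} \<subseteq> U"
    and gu: "g u \<le> g a + \<eta> * (u - a) + (\<Sum>i<n. \<bar>g (tt i) - g (ss i)\<bar>) + e / 2"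
    using below[of u] \<open>e > 0\<close> unfolding slope_jump_bound_def by (meson half_gt_zero)
  have "dist (g u) (g s) < e / 2"
    using d[of u] u \<open>s \<le> b\<close> by simp
  moreover have "\<eta> * (u - a) \<le> \<eta> * (s - a)"
    using u \<open>\<eta> \<ge> 0\<close> by (simp add: mult_left_mono)
  ultimately have "g s \<le> g a + \<eta> * (s - a) + (\<Sum>i<n. \<bar>g (tt i) - g (ss i)\<bar>) + e"
    using gu unfolding dist_real_def by linarith
  moreover have "nonoverlapping_subintervals a s n ss tt"
    using nonoverlapping_subintervals_mono[OF fam(1) order_refl] u by simp
  ultimately show "\<exists>n ss tt. nonoverlapping_subintervals a s n ss tt \<and> (\<forall>i<n. {ss i..tt i} \<subseteq> U) \<and>
      g s \<le> g a + \<eta> * (s - a) + (\<Sum>i<n. \<bar>g (tt i) - g (ss i)\<bar>) + e"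
    using fam(2) by blast
qed

lemma slope_jump_bound_slope_step:
  assumes "slope_jump_bound g U \<eta> a s" "s \<le> w" "g w - g s \<le> \<eta> * (w - s)"
  shows "slope_jump_bound g U \<eta> a w"
  unfolding slope_jump_bound_def
proof (intro allI impI)
  fix e :: real assume "e > 0"
  then obtain n ss tt where fam: "nonoverlapping_subintervals a s n ss tt" "\<forall>i<n. {ss i..tt i} \<subseteq> U"
    and gs: "g s \<le> g a + \<eta> * (s - a) + (\<Sum>i<n. \<bar>g (tt i) - g (ss i)\<bar>) + e"
    using assms(1) unfolding slope_jump_bound_def by blast
  have "g w \<le> g a + \<eta> * (w - a) + (\<Sum>i<n. \<bar>g (tt i) - g (ss i)\<bar>) + e"
    using gs assms(3) by (simp add: algebra_simps)
  moreover have "nonoverlapping_subintervals a w n ss tt"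
    using nonoverlapping_subintervals_mono[OF fam(1) order_refl \<open>s \<le> w\<close>] .
  ultimately show "\<exists>n ss tt. nonoverlapping_subintervals a w n ss tt \<and> (\<forall>i<n. {ss i..tt i} \<subseteq> U) \<and>
      g w \<le> g a + \<eta> * (w - a) + (\<Sum>i<n. \<bar>g (tt i) - g (ss i)\<bar>) + e"
    using fam(2) by blast
qed

lemma slope_jump_bound_jump_step:
  assumes "slope_jump_bound g U \<eta> a s" "\<eta> \<ge> 0" "a \<le> s" "s \<le> w" "{s..w} \<subseteq> U"
  shows "slope_jump_bound g U \<eta> a w"
  unfolding slope_jump_bound_def
proof (intro allI impI)
  fix e :: real assume "e > 0"
  then obtain n ss tt where fam: "nonoverlapping_subintervals a s n ss tt" "\<forall>i<n. {ss i..tt i} \<subseteq> U"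
    and gs: "g s \<le> g a + \<eta> * (s - a) + (\<Sum>i<n. \<bar>g (tt i) - g (ss i)\<bar>) + e"
    using assms(1) unfolding slope_jump_bound_def by blast
  define ss' where "ss' = ss(n := s)"
  define tt' where "tt' = tt(n := w)"
  have fam': "nonoverlapping_subintervals a w (Suc n) ss' tt'" "\<forall>i<Suc n. {ss' i..tt' i} \<subseteq> U"
    using nonoverlapping_subintervals_snoc[OF fam(1) \<open>a \<le> s\<close> \<open>s \<le> w\<close>] fam(2) \<open>{s..w} \<subseteq> U\<close>
    unfolding ss'_def tt'_def by (auto simp: less_Suc_eq)
  have "(\<Sum>i<Suc n. \<bar>g (tt' i) - g (ss' i)\<bar>) = (\<Sum>i<n. \<bar>g (tt i) - g (ss i)\<bar>) + \<bar>g w - g s\<bar>"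
    unfolding ss'_def tt'_def by simp
  moreover have "\<eta> * (s - a) \<le> \<eta> * (w - a)"
    using assms(2,4) by (simp add: mult_left_mono)
  ultimately have "g w \<le> g a + \<eta> * (w - a) + (\<Sum>i<Suc n. \<bar>g (tt' i) - g (ss' i)\<bar>) + e"
    using gs by linarith
  with fam' show "\<exists>n ss tt. nonoverlapping_subintervals a w n ss tt \<and> (\<forall>i<n. {ss i..tt i} \<subseteq> U) \<and>
      g w \<le> g a + \<eta> * (w - a) + (\<Sum>i<n. \<bar>g (tt i) - g (ss i)\<bar>) + e"
    by blast
qed

lemma slope_jump_bound_of_right_dini:
  fixes g :: "real \<Rightarrow> real"
  assumes "a \<le> b" and g: "continuous_on {a..b} g" and "\<eta> > 0" and U: "open U" "N \<subseteq> U"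
    and dini: "\<And>t. t \<in> {a..b} \<Longrightarrow> t \<notin> N \<Longrightarrow>
                 eventually (\<lambda>u. g u - g t \<le> \<eta> * (u - t)) (at_right t)"
  shows "slope_jump_bound g U \<eta> a b"
proof (rule real_interval_induct[OF \<open>a \<le> b\<close>])
  fix s assume "a < s" "s \<le> b" "\<And>u. a \<le> u \<Longrightarrow> u < s \<Longrightarrow> slope_jump_bound g U \<eta> a u"
  with \<open>\<eta> > 0\<close> show "slope_jump_bound g U \<eta> a s"
    using slope_jump_bound_left_closed[OF g] by simp
next
  fix s assume s: "a \<le> s" "s < b" and "\<And>u. a \<le> u \<Longrightarrow> u \<le> s \<Longrightarrow> slope_jump_bound g U \<eta> a u"
  then have bound_s: "slope_jump_bound g U \<eta> a s"
    by simp
  show "\<exists>u>s. \<forall>w. s < w \<and> w \<le> u \<longrightarrow> slope_jump_bound g U \<eta> a w"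
  proof (cases "s \<in> N")
    case False
    then obtain u where "u > s" and u: "\<And>w. s < w \<Longrightarrow> w < u \<Longrightarrow> g w - g s \<le> \<eta> * (w - s)"
      using dini[of s] s unfolding eventually_at_right_field by auto
    show ?thesis
    proof (intro exI[of _ "(s + u) / 2"] conjI allI impI)
      fix w assume "s < w \<and> w \<le> (s + u) / 2"
      with \<open>u > s\<close> show "slope_jump_bound g U \<eta> a w"
        using slope_jump_bound_slope_step[OF bound_s, of w] u[of w] by simp
    qed (use \<open>u > s\<close> in simp)
  next
    case True
    then obtain r where "r > 0" and r: "ball s r \<subseteq> U"
      using U open_contains_ball by blast
    have r_cover: "{s..w} \<subseteq> U" if "w < s + r" for w
      using r that by (auto simp: dist_real_def subset_iff)
    show ?thesis
    proof (intro exI[of _ "s + r / 2"] conjI allI impI)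
      fix w assume "s < w \<and> w \<le> s + r / 2"
      with \<open>r > 0\<close> \<open>\<eta> > 0\<close> \<open>a \<le> s\<close> show "slope_jump_bound g U \<eta> a w"
        using slope_jump_bound_jump_step[OF bound_s, of w] r_cover[of w] by simp
    qed (use \<open>r > 0\<close> in simp)
  qed
qed (rule slope_jump_bound_refl)

text \<open>The null set \<open>N\<close> is covered by an open set of small measure, on which the increase of
  \<open>g\<close> is small by absolute continuity.\<close>
lemma abs_cont_right_dini_le:
  fixes g :: "real \<Rightarrow> real"
  assumes "a \<le> b" and ac: "abs_cont_metric dist g a b" and N: "N \<in> null_sets lebesgue"
    and dini: "\<And>t e. t \<in> {a..b} \<Longrightarrow> t \<notin> N \<Longrightarrow> e > 0 \<Longrightarrow>
                 eventually (\<lambda>u. g u - g t \<le> e * (u - t)) (at_right t)"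
  shows "g b \<le> g a"
proof -
  have bound: "g b \<le> g a + \<eta> * (b - a) + 2 * \<epsilon>" if "\<eta> > 0" "\<epsilon> > 0" for \<eta> \<epsilon>
  proof -
    obtain \<delta> where "\<delta> > 0" and \<delta>: "\<And>n s t. nonoverlapping_subintervals a b n s t \<Longrightarrow>
        (\<Sum>i<n. t i - s i) < \<delta> \<Longrightarrow> (\<Sum>i<n. dist (g (s i)) (g (t i))) < \<epsilon>"
      using abs_cont_metricE[OF ac \<open>\<epsilon> > 0\<close>] by blast
    obtain U where U: "open U" "N \<subseteq> U" "U \<in> lmeasurable" "measure lebesgue U < \<delta>"
      using null_set_open_cover[OF N \<open>\<delta> > 0\<close>] by blast
    have "slope_jump_bound g U \<eta> a b"
      using \<open>\<eta> > 0\<close> dini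
      by (intro slope_jump_bound_of_right_dini[OF \<open>a \<le> b\<close> abs_cont_metric_imp_continuous_on[OF ac] _ U(1,2)])
        auto
    then obtain n ss tt where fam: "nonoverlapping_subintervals a b n ss tt" "\<forall>i<n. {ss i..tt i} \<subseteq> U"
      and gb: "g b \<le> g a + \<eta> * (b - a) + (\<Sum>i<n. \<bar>g (tt i) - g (ss i)\<bar>) + \<epsilon>"
      using \<open>\<epsilon> > 0\<close> unfolding slope_jump_bound_def by blast
    have "(\<Sum>i<n. tt i - ss i) < \<delta>"
      using sum_lengths_le_measure[OF fam(1) _ U(3)] fam(2) U(4) by simp
    then have "(\<Sum>i<n. \<bar>g (tt i) - g (ss i)\<bar>) < \<epsilon>"
      using \<delta>[OF fam(1)] by (simp add: dist_real_def abs_minus_commute)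
    with gb show ?thesis by linarith
  qed
  show ?thesis
  proof (rule field_le_epsilon)
    fix e :: real assume "e > 0"
    define \<eta> where "\<eta> = e / (2 * (b - a + 1))"
    have "\<eta> > 0" "\<eta> * (b - a) \<le> e / 2"
      using \<open>e > 0\<close> \<open>a \<le> b\<close> unfolding \<eta>_def by (auto simp: field_simps)
    with bound[of \<eta> "e / 4"] \<open>e > 0\<close> show "g b \<le> g a + e" by linarith
  qed
qed

section \<open>Metric derivatives\<close>

lemma has_metric_derivative_nonneg:
  "has_metric_derivative \<beta> v t \<Longrightarrow> v \<ge> 0"
  unfolding has_metric_derivative_def by (rule tendsto_lowerbound) auto

lemma dist_minus_right_dini:
  fixes \<beta> :: "real \<Rightarrow> 'a::metric_space"
  assumes \<beta>: "has_metric_derivative \<beta> v t" and \<phi>: "(\<phi> has_real_derivative D) (at t)"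
    and "v \<le> D" "e > 0"
  shows "eventually (\<lambda>u. (dist z (\<beta> u) - \<phi> u) - (dist z (\<beta> t) - \<phi> t) \<le> e * (u - t)) (at_right t)"
proof -
  have "eventually (\<lambda>u. dist (\<beta> u) (\<beta> t) / \<bar>u - t\<bar> < v + e / 2) (at_right t)"
    using \<beta> \<open>e > 0\<close> unfolding has_metric_derivative_def
    by (intro filter_leD[OF at_le order_tendstoD(2)]) auto
  moreover have "eventually (\<lambda>u. D - e / 2 < (\<phi> u - \<phi> t) / (u - t)) (at_right t)"
    using \<phi> \<open>e > 0\<close> unfolding has_field_derivative_iff
    by (intro filter_leD[OF at_le order_tendstoD(1)]) auto
  ultimately show ?thesis
    using eventually_at_right_less
  proof eventually_elim
    case (elim u)
    then have "dist (\<beta> u) (\<beta> t) < (v + e / 2) * (u - t)" "(D - e / 2) * (u - t) < \<phi> u - \<phi> t"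
      by (simp_all add: pos_divide_less_eq pos_less_divide_eq)
    moreover have "dist z (\<beta> u) \<le> dist z (\<beta> t) + dist (\<beta> u) (\<beta> t)"
      by (rule dist_triangle2)
    moreover have "(v - D) * (u - t) \<le> 0"
      using \<open>v \<le> D\<close> elim by (simp add: mult_nonpos_nonneg)
    moreover have "(v + e / 2) * (u - t) - (D - e / 2) * (u - t) = (v - D) * (u - t) + e * (u - t)"
      by (simp add: algebra_simps)
    ultimately show ?case
      by linarith
  qed
qed

lemma dist_le_of_metric_derivative_le:
  fixes \<beta> :: "real \<Rightarrow> 'a::metric_space" and \<phi> :: "real \<Rightarrow> real"
  assumes "a \<le> b" and \<beta>: "abs_cont_metric dist \<beta> a b" and \<phi>: "abs_cont_metric dist \<phi> a b"
    and AE: "AE t in lebesgue. t \<in> {a..b} \<longrightarrow>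
      (\<exists>v D. has_metric_derivative \<beta> v t \<and> (\<phi> has_real_derivative D) (at t) \<and> v \<le> D)"
  shows "dist (\<beta> a) (\<beta> b) \<le> \<phi> b - \<phi> a"
proof -
  define h where "h u = dist (\<beta> a) (\<beta> u) - \<phi> u" for u
  have ac_h: "abs_cont_metric dist h a b"
  proof (rule abs_cont_metric_dominated[OF \<beta> \<phi>])
    fix u w
    have "\<bar>dist (\<beta> u) (\<beta> a) - dist (\<beta> a) (\<beta> w)\<bar> \<le> dist (\<beta> u) (\<beta> w)"
      by (rule abs_dist_diff_le)
    then show "dist (h u) (h w) \<le> dist (\<beta> u) (\<beta> w) + dist (\<phi> u) (\<phi> w)"
      unfolding h_def dist_real_def by (auto simp: dist_commute abs_le_iff)
  qed
  obtain N where good: "\<And>t. t \<in> space lebesgue - N \<Longrightarrow>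
      t \<in> {a..b} \<longrightarrow> (\<exists>v D. has_metric_derivative \<beta> v t \<and> (\<phi> has_real_derivative D) (at t) \<and> v \<le> D)"
    and N: "N \<in> null_sets lebesgue"
    by (rule AE_E3[OF AE]) blast
  have "h b \<le> h a"
  proof (rule abs_cont_right_dini_le[OF \<open>a \<le> b\<close> ac_h N])
    fix t e :: real assume "t \<in> {a..b}" "t \<notin> N" "e > 0"
    then obtain v D where "has_metric_derivative \<beta> v t" "(\<phi> has_real_derivative D) (at t)" "v \<le> D"
      using good[of t] by auto
    from dist_minus_right_dini[OF this \<open>e > 0\<close>]
    show "eventually (\<lambda>u. h u - h t \<le> e * (u - t)) (at_right t)"
      unfolding h_def .
  qed
  then show ?thesis
    unfolding h_def by simp
qed

section \<open>Curve length and geodesics\<close>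

lemma curve_length_ge_partition:
  assumes "t 0 = a" "t n = b" "\<forall>i<n. t i \<le> t (Suc i)"
  shows "ereal (\<Sum>i<n. dd (g (t i)) (g (t (Suc i)))) \<le> curve_length dd g a b"
proof -
  have "(n, t) \<in> {(n, t). t 0 = a \<and> t n = b \<and> (\<forall>i<n. t i \<le> t (Suc i))}"
    using assms by simp
  then show ?thesis
    unfolding curve_length_def by (rule SUP_upper2) simp
qed

lemma curve_length_le_of_increment_le:
  assumes inc: "\<And>u w. a \<le> u \<Longrightarrow> u \<le> w \<Longrightarrow> w \<le> b \<Longrightarrow> dd (g u) (g w) \<le> h w - h u"
  shows "curve_length dd g a b \<le> ereal (h b - h a)"
  unfolding curve_length_def
proof (rule SUP_least)
  fix P assume "P \<in> {(n, t). t 0 = a \<and> t n = b \<and> (\<forall>i<n. t i \<le> t (Suc i))}"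
  then obtain n t where P: "P = (n, t)" and t: "t 0 = a" "t n = b" "\<forall>i<n. t i \<le> t (Suc i)"
    by blast
  have mono: "t i \<le> t j" if "i \<le> j" "j \<le> n" for i j
    using that
  proof (induction j)
    case (Suc j)
    then show ?case
      using t(3) by (cases "i = Suc j") (auto simp: le_Suc_eq intro: order_trans)
  qed simp
  have "(\<Sum>i<n. dd (g (t i)) (g (t (Suc i)))) \<le> (\<Sum>i<n. h (t (Suc i)) - h (t i))"
    using mono[of 0] mono[of _ n] t by (intro sum_mono inc) auto
  also have "\<dots> = h b - h a"
    using t sum_lessThan_telescope[of "\<lambda>i. h (t i)" n] by simp
  finally show "ereal (\<Sum>i<fst P. dd (g (snd P i)) (g (snd P (Suc i)))) \<le> ereal (h b - h a)"
    unfolding P by simp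
qed

lemma shortest_curve_dist_eq:
  fixes \<gamma> :: "real \<Rightarrow> 'a::metric_space"
  assumes len: "curve_length dist \<gamma> 0 1 = ereal (dist (\<gamma> 0) (\<gamma> 1))" and "u \<in> {0..1}" "w \<in> {0..1}"
  shows "dist (\<gamma> u) (\<gamma> w) = \<bar>dist (\<gamma> 0) (\<gamma> w) - dist (\<gamma> 0) (\<gamma> u)\<bar>"
proof -
  have aligned: "dist (\<gamma> 0) (\<gamma> u) + dist (\<gamma> u) (\<gamma> w) + dist (\<gamma> w) (\<gamma> 1) = dist (\<gamma> 0) (\<gamma> 1)"
    if "0 \<le> u" "u \<le> w" "w \<le> 1" for u w
  proof -
    define t where "t i = (if i = 0 then 0 else if i = 1 then u else if i = 2 then w else 1)" for i :: nat
    have "ereal (\<Sum>i<3. dist (\<gamma> (t i)) (\<gamma> (t (Suc i)))) \<le> curve_length dist \<gamma> 0 1"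
      using that by (intro curve_length_ge_partition) (auto simp: t_def less_Suc_eq numeral_3_eq_3)
    then have "dist (\<gamma> 0) (\<gamma> u) + dist (\<gamma> u) (\<gamma> w) + dist (\<gamma> w) (\<gamma> 1) \<le> dist (\<gamma> 0) (\<gamma> 1)"
      using len by (simp add: numeral_3_eq_3 t_def)
    moreover have "dist (\<gamma> 0) (\<gamma> 1) \<le> dist (\<gamma> 0) (\<gamma> u) + dist (\<gamma> u) (\<gamma> w) + dist (\<gamma> w) (\<gamma> 1)"
      using dist_triangle[of "\<gamma> 0" "\<gamma> 1" "\<gamma> u"] dist_triangle[of "\<gamma> u" "\<gamma> 1" "\<gamma> w"] by linarith
    ultimately show ?thesis by linarith
  qed
  have ordered: "dist (\<gamma> u) (\<gamma> w) = dist (\<gamma> 0) (\<gamma> w) - dist (\<gamma> 0) (\<gamma> u)"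
    if "0 \<le> u" "u \<le> w" "w \<le> 1" for u w
    using aligned[OF that] aligned[of w w] that by simp
  show ?thesis
  proof (cases "u \<le> w")
    case True
    with ordered[of u w] assms(2,3) zero_le_dist[of "\<gamma> u" "\<gamma> w"] show ?thesis
      by (simp add: abs_of_nonneg)
  next
    case False
    with ordered[of w u] assms(2,3) zero_le_dist[of "\<gamma> w" "\<gamma> u"] show ?thesis
      by (simp add: abs_of_nonpos dist_commute)
  qed
qed

lemma geodesic_space_constant_speed:
  fixes x y :: "'a::metric_space"
  assumes "geodesic_space TYPE('a)"
  obtains \<sigma> :: "real \<Rightarrow> 'a" where "\<sigma> 0 = x" "\<sigma> 1 = y"
    "\<And>l m. l \<in> {0..1} \<Longrightarrow> m \<in> {0..1} \<Longrightarrow> dist (\<sigma> l) (\<sigma> m) = \<bar>l - m\<bar> * dist x y"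
proof -
  obtain \<gamma> :: "real \<Rightarrow> 'a" where \<gamma>: "continuous_on {0..1} \<gamma>" "\<gamma> 0 = x" "\<gamma> 1 = y"
    and len: "curve_length dist \<gamma> 0 1 = ereal (dist x y)"
    using assms unfolding geodesic_space_def by blast
  have dist_\<gamma>: "dist (\<gamma> u) (\<gamma> w) = \<bar>dist x (\<gamma> w) - dist x (\<gamma> u)\<bar>" if "u \<in> {0..1}" "w \<in> {0..1}" for u w
    using shortest_curve_dist_eq[of \<gamma> u w] len that \<gamma>(2,3) by simp
  have "\<exists>u\<in>{0..1}. dist x (\<gamma> u) = l * dist x y" if "l \<in> {0..1}" for l
  proof -
    have "\<exists>u. 0 \<le> u \<and> u \<le> 1 \<and> dist x (\<gamma> u) = l * dist x y"
      using that \<gamma> by (intro IVT') (auto intro!: continuous_intros simp: mult_left_le_one_le)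
    then show ?thesis by auto
  qed
  then obtain \<nu> where \<nu>: "\<And>l. l \<in> {0..1} \<Longrightarrow> \<nu> l \<in> {0..1} \<and> dist x (\<gamma> (\<nu> l)) = l * dist x y"
    by metis
  show thesis
  proof (rule that[of "\<gamma> \<circ> \<nu>"])
    show "(\<gamma> \<circ> \<nu>) 0 = x"
      using \<nu>[of 0] by simp
    show "(\<gamma> \<circ> \<nu>) 1 = y"
      using \<nu>[of 1] dist_\<gamma>[of "\<nu> 1" 1] \<gamma>(3) by simp
    show "dist ((\<gamma> \<circ> \<nu>) l) ((\<gamma> \<circ> \<nu>) m) = \<bar>l - m\<bar> * dist x y" if "l \<in> {0..1}" "m \<in> {0..1}" for l m
      using dist_\<gamma>[of "\<nu> l" "\<nu> m"] \<nu>[OF that(1)] \<nu>[OF that(2)]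
      by (simp add: left_diff_distrib[symmetric] abs_mult abs_minus_commute)
  qed
qed

section \<open>The metric of the generalized cone\<close>

lemma Metric_space_cone_dist: "Metric_space M (cone_dist :: real \<times> 'a::metric_space \<Rightarrow> _)"
proof
  fix x y z :: "real \<times> 'a"
  show "0 \<le> cone_dist x y"
    unfolding cone_dist_def by simp
  show "cone_dist x y = cone_dist y x"
    unfolding cone_dist_def by (simp add: abs_minus_commute dist_commute)
  show "cone_dist x y = 0 \<longleftrightarrow> x = y"
    unfolding cone_dist_def by (cases x, cases y) (auto simp: add_nonneg_eq_0_iff)
  show "cone_dist x z \<le> cone_dist x y + cone_dist y z"
    unfolding cone_dist_def using dist_triangle[of "snd x" "snd z" "snd y"] by linarith
qed

lemma dist_le_cone_dist: "dist y y' \<le> cone_dist y (y' :: real \<times> 'a::metric_space)"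
  using sqrt_sum_squares_le_sum[of "dist (fst y) (fst y')" "dist (snd y) (snd y')"]
  unfolding cone_dist_def dist_prod_def by (simp add: dist_real_def)

lemma cone_dist_le_dist: "cone_dist y y' \<le> 2 * dist y (y' :: real \<times> 'a::metric_space)"
  using dist_fst_le[of y y'] dist_snd_le[of y y'] unfolding cone_dist_def by (simp add: dist_real_def)

lemma mtopology_eq_top_of_set:
  assumes "Metric_space M d" and "C > 0"
    and dist_le: "\<And>x y. x \<in> M \<Longrightarrow> y \<in> M \<Longrightarrow> dist x y \<le> d x y"
    and le_dist: "\<And>x y. x \<in> M \<Longrightarrow> y \<in> M \<Longrightarrow> d x y \<le> C * dist x y"
  shows "Metric_space.mtopology M d = top_of_set M"
proof -
  interpret Metric_space M d by fact
  have "openin (top_of_set M) S" if S: "openin mtopology S" for S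
    unfolding openin_euclidean_subtopology_iff
  proof (intro conjI ballI)
    show "S \<subseteq> M"
      using S unfolding openin_mtopology by blast
    fix x assume "x \<in> S"
    then obtain r where "r > 0" "mball x r \<subseteq> S"
      using S unfolding openin_mtopology by blast
    moreover have "x' \<in> mball x r" if "x' \<in> M" "dist x' x < r / C" for x'
      using le_dist[of x x'] that \<open>x \<in> S\<close> \<open>S \<subseteq> M\<close> \<open>C > 0\<close> by (auto simp: dist_commute field_simps)
    ultimately show "\<exists>e>0. \<forall>x'\<in>M. dist x' x < e \<longrightarrow> x' \<in> S"
      using \<open>C > 0\<close> by (intro exI[of _ "r / C"]) auto
  qed
  moreover have "openin mtopology S" if S: "openin (top_of_set M) S" for S
    unfolding openin_mtopology
  proof (intro conjI allI impI)
    show "S \<subseteq> M"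
      using S unfolding openin_euclidean_subtopology_iff by blast
    fix x assume "x \<in> S"
    then obtain e where "e > 0" and e: "\<forall>x'\<in>M. dist x' x < e \<longrightarrow> x' \<in> S"
      using S unfolding openin_euclidean_subtopology_iff by blast
    have "mball x e \<subseteq> S"
      using dist_le e by (force simp: dist_commute)
    with \<open>e > 0\<close> show "\<exists>r>0. mball x r \<subseteq> S" by blast
  qed
  ultimately show ?thesis
    unfolding topology_eq by blast
qed

lemma cone_topology_eq: "cone_topology I = top_of_set (cone_space I :: (real \<times> 'a::metric_space) set)"
  unfolding cone_topology_def
proof (rule mtopology_eq_top_of_set[OF Metric_space_cone_dist, of 2])
  show "dist x y \<le> cone_dist x y" "cone_dist x y \<le> 2 * dist x y" for x y :: "real \<times> 'a"
    by (rule dist_le_cone_dist, rule cone_dist_le_dist)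
qed simp

lemma compactin_cone_topology:
  "compactin (cone_topology I) K \<longleftrightarrow> compact K \<and> K \<subseteq> (cone_space I :: (real \<times> 'a::metric_space) set)"
  by (simp add: cone_topology_eq compactin_subtopology)

section \<open>Causal curves\<close>

lemma causal_curveD:
  assumes "causal_curve I f \<gamma> a b"
  shows "a < b" "\<gamma> ` {a..b} \<subseteq> cone_space I" "abs_cont_metric cone_dist \<gamma> a b"
    "strict_mono_on {a..b} (fst \<circ> \<gamma>) \<or> strict_mono_on {a..b} (\<lambda>t. - fst (\<gamma> t))"
    "AE t in lebesgue. t \<in> {a..b} \<longrightarrow>
       (\<exists>da v. ((fst \<circ> \<gamma>) has_real_derivative da) (at t) \<and> has_metric_derivative (snd \<circ> \<gamma>) v t \<and>
               - (da\<^sup>2) + (f (fst (\<gamma> t)))\<^sup>2 * v\<^sup>2 \<le> 0)"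
  using assms unfolding causal_curve_def by blast+

lemma strict_mono_on_deriv_nonneg:
  fixes \<alpha> :: "real \<Rightarrow> real"
  assumes "strict_mono_on {a..b} \<alpha>" "t \<in> {a<..<b}" "(\<alpha> has_real_derivative D) (at t)"
  shows "D \<ge> 0"
proof -
  have "((\<lambda>s. (\<alpha> s - \<alpha> t) / (s - t)) \<longlongrightarrow> D) (at_right t)"
    using assms(3) unfolding has_field_derivative_iff by (rule tendsto_mono[OF at_le, rotated]) simp
  moreover have "eventually (\<lambda>s. 0 \<le> (\<alpha> s - \<alpha> t) / (s - t)) (at_right t)"
    unfolding eventually_at_right_field
  proof (intro exI[of _ b] conjI allI impI)
    fix s assume "t < s" "s < b"
    with assms(1,2) show "0 \<le> (\<alpha> s - \<alpha> t) / (s - t)"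
      using strict_mono_onD[OF assms(1), of t s] by simp
  qed (use assms(2) in simp)
  ultimately show ?thesis
    by (rule tendsto_lowerbound) simp
qed

lemma causal_curve_orientation:
  assumes "causal_curve I f \<gamma> a b"
  obtains \<sigma> :: real where "\<sigma> = 1 \<or> \<sigma> = -1" "strict_mono_on {a..b} (\<lambda>t. \<sigma> * fst (\<gamma> t))"
  using causal_curveD(4)[OF assms]
proof
  assume "strict_mono_on {a..b} (fst \<circ> \<gamma>)"
  with that[of 1] show thesis by (simp add: o_def)
next
  assume "strict_mono_on {a..b} (\<lambda>t. - fst (\<gamma> t))"
  with that[of "-1"] show thesis by simp
qed

lemma future_directed_strict_mono:
  assumes causal: "causal_curve I f \<gamma> a b" and fd: "future_directed \<gamma> a b"
  shows "strict_mono_on {a..b} (\<lambda>t. fst (\<gamma> t))"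
proof -
  obtain \<sigma> where \<sigma>: "\<sigma> = 1 \<or> \<sigma> = -1" "strict_mono_on {a..b} (\<lambda>t. \<sigma> * fst (\<gamma> t))"
    using causal_curve_orientation[OF causal] .
  obtain N where good: "\<And>t. t \<in> space lebesgue - N \<Longrightarrow>
      t \<in> {a..b} \<longrightarrow> (\<exists>da. ((fst \<circ> \<gamma>) has_real_derivative da) (at t) \<and> da > 0)"
    and N: "N \<in> null_sets lebesgue"
    by (rule AE_E3[OF fd[unfolded future_directed_def]]) blast
  have "\<sigma> = 1"
  proof (rule ccontr)
    assume "\<sigma> \<noteq> 1"
    have "{a<..<b} \<subseteq> N"
    proof
      fix t assume t: "t \<in> {a<..<b}"
      show "t \<in> N"
      proof (rule ccontr)
        assume "t \<notin> N"
        then obtain da where "((\<lambda>t. fst (\<gamma> t)) has_real_derivative da) (at t)" "da > 0"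
          using good[of t] t by (auto simp: o_def)
        then have "((\<lambda>t. \<sigma> * fst (\<gamma> t)) has_real_derivative \<sigma> * da) (at t)"
          by (intro DERIV_cmult)
        from strict_mono_on_deriv_nonneg[OF \<sigma>(2) t this] \<open>da > 0\<close> \<sigma>(1) \<open>\<sigma> \<noteq> 1\<close>
        show False by simp
      qed
    qed
    then have "negligible {a<..<b}"
      using N negligible_subset by (auto simp flip: negligible_iff_null_sets)
    with causal_curveD(1)[OF causal] show False
      using negligible_interval(2)[of a b] by simp
  qed
  with \<sigma>(2) show ?thesis by simp
qed

lemma causal_speed_le:
  fixes \<alpha> :: "real \<Rightarrow> real"
  assumes \<sigma>: "\<sigma> = 1 \<or> \<sigma> = -1" "strict_mono_on {a..b} (\<lambda>t. \<sigma> * \<alpha> t)" "t \<in> {a<..<b}"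
    and da: "(\<alpha> has_real_derivative da) (at t)" and causal: "- (da\<^sup>2) + c\<^sup>2 * v\<^sup>2 \<le> 0"
    and "c > 0" "v \<ge> 0" and D: "1 / c \<le> \<sigma> * D"
  shows "v \<le> D * da"
proof -
  have "0 \<le> \<sigma> * da"
    using \<sigma>(2,3) DERIV_cmult[OF da] by (rule strict_mono_on_deriv_nonneg)
  have "(c * v)\<^sup>2 \<le> (\<sigma> * da)\<^sup>2"
    using \<sigma>(1) causal by (auto simp: power_mult_distrib)
  then have "c * v \<le> \<sigma> * da"
    using \<open>0 \<le> \<sigma> * da\<close> by (rule power2_le_imp_le)
  then have "v \<le> 1 / c * (\<sigma> * da)"
    using \<open>c > 0\<close> by (simp add: pos_le_divide_eq mult.commute)
  also have "\<dots> \<le> (\<sigma> * D) * (\<sigma> * da)"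
    using D \<open>0 \<le> \<sigma> * da\<close> by (rule mult_right_mono)
  also have "\<dots> = D * da"
    using \<sigma>(1) by (elim disjE) simp_all
  finally show ?thesis .
qed

lemma causal_curve_fst_mem:
  "causal_curve I f \<gamma> a b \<Longrightarrow> t \<in> {a..b} \<Longrightarrow> fst (\<gamma> t) \<in> I"
  using causal_curveD(2) by (fastforce simp: cone_space_def mem_Times_iff)

lemma causal_curve_abs_cont_snd:
  assumes "causal_curve I f \<gamma> a b" "a \<le> s" "s' \<le> b"
  shows "abs_cont_metric dist (\<lambda>t. snd (\<gamma> t)) s s'"
  by (rule abs_cont_metric_transfer[OF causal_curveD(3)[OF assms(1)] assms(2,3), of 1])
    (auto simp: cone_dist_def)

lemma causal_curve_abs_cont_lipschitz_fst:
  assumes "causal_curve I f \<gamma> a b" "a \<le> s" "s' \<le> b" and G: "M-lipschitz_on (fst ` \<gamma> ` {a..b}) G"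
  shows "abs_cont_metric dist (\<lambda>t. G (fst (\<gamma> t))) s s'"
proof (rule abs_cont_metric_transfer[OF causal_curveD(3)[OF assms(1)] assms(2,3) lipschitz_on_nonneg[OF G]])
  fix u w assume "u \<in> {s..s'}" "w \<in> {s..s'}"
  then have "dist (G (fst (\<gamma> u))) (G (fst (\<gamma> w))) \<le> M * dist (fst (\<gamma> u)) (fst (\<gamma> w))"
    using assms(2,3) by (intro lipschitz_onD[OF G]) auto
  also have "\<dots> \<le> M * cone_dist (\<gamma> u) (\<gamma> w)"
    using lipschitz_on_nonneg[OF G] by (intro mult_left_mono) (auto simp: cone_dist_def dist_real_def)
  finally show "dist (G (fst (\<gamma> u))) (G (fst (\<gamma> w))) \<le> M * cone_dist (\<gamma> u) (\<gamma> w)" .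
qed

lemma causal_curve_dist_le:
  fixes \<gamma> :: "real \<Rightarrow> real \<times> 'a::metric_space"
  assumes causal: "causal_curve I f \<gamma> a b" and pos: "\<forall>t\<in>I. f t > 0"
    and \<sigma>: "\<sigma> = 1 \<or> \<sigma> = -1" "strict_mono_on {a..b} (\<lambda>t. \<sigma> * fst (\<gamma> t))"
    and G: "M-lipschitz_on (fst ` \<gamma> ` {a..b}) G"
    and G': "\<And>t. t \<in> {a<..<b} \<Longrightarrow>
               \<exists>D. (G has_real_derivative D) (at (fst (\<gamma> t))) \<and> 1 / f (fst (\<gamma> t)) \<le> \<sigma> * D"
    and s: "a \<le> s" "s \<le> s'" "s' \<le> b"
  shows "dist (snd (\<gamma> s)) (snd (\<gamma> s')) \<le> G (fst (\<gamma> s')) - G (fst (\<gamma> s))"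
proof (rule dist_le_of_metric_derivative_le[OF s(2)])
  show "abs_cont_metric dist (\<lambda>t. snd (\<gamma> t)) s s'"
    using causal s(1,3) by (rule causal_curve_abs_cont_snd)
  show "abs_cont_metric dist (\<lambda>t. G (fst (\<gamma> t))) s s'"
    using causal s(1,3) G by (rule causal_curve_abs_cont_lipschitz_fst)
  have "AE t in lebesgue. t \<notin> {a, b}"
    by (rule AE_not_in) (simp flip: negligible_iff_null_sets)
  with causal_curveD(5)[OF causal]
  show "AE t in lebesgue. t \<in> {s..s'} \<longrightarrow> (\<exists>v D. has_metric_derivative (\<lambda>t. snd (\<gamma> t)) v t \<and>
          ((\<lambda>t. G (fst (\<gamma> t))) has_real_derivative D) (at t) \<and> v \<le> D)"
  proof eventually_elim
    case (elim t)
    show ?case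
    proof
      assume "t \<in> {s..s'}"
      with elim(2) s have t: "t \<in> {a<..<b}" by auto
      with elim(1) obtain da v where da: "((\<lambda>t. fst (\<gamma> t)) has_real_derivative da) (at t)"
        and v: "has_metric_derivative (\<lambda>t. snd (\<gamma> t)) v t"
        and ineq: "- (da\<^sup>2) + (f (fst (\<gamma> t)))\<^sup>2 * v\<^sup>2 \<le> 0"
        by (auto simp: o_def)
      obtain D where D: "(G has_real_derivative D) (at (fst (\<gamma> t)))"
        and D_ge: "1 / f (fst (\<gamma> t)) \<le> \<sigma> * D"
        using G'[OF t] by blast
      have "f (fst (\<gamma> t)) > 0"
        using pos causal_curve_fst_mem[OF causal, of t] t by simp
      with causal_speed_le[OF \<sigma> t da ineq _ has_metric_derivative_nonneg[OF v] D_ge]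
      show "\<exists>v D. has_metric_derivative (\<lambda>t. snd (\<gamma> t)) v t \<and>
          ((\<lambda>t. G (fst (\<gamma> t))) has_real_derivative D) (at t) \<and> v \<le> D"
        using v DERIV_chain2[OF D da] by blast
    qed
  qed
qed

section \<open>Optical time and the causal relation\<close>

text \<open>Along a null curve \<open>|\<beta>'| = \<alpha>' / f \<alpha>\<close>; hence the distance in \<open>X\<close> light can cover between the
  times \<open>t\<close> and \<open>t'\<close> is \<open>optical_time f c t' - optical_time f c t\<close>.\<close>
definition optical_time :: "(real \<Rightarrow> real) \<Rightarrow> real \<Rightarrow> real \<Rightarrow> real" where
  "optical_time f c x = integral {c..x} (\<lambda>s. 1 / f s)"

context
  fixes f :: "real \<Rightarrow> real" and c d :: real
  assumes f_cont: "continuous_on {c..d} f" and f_pos: "\<And>x. x \<in> {c..d} \<Longrightarrow> f x > 0"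
begin

lemma continuous_on_inverse_speed: "continuous_on {c..d} (\<lambda>s. 1 / f s)"
  using f_pos by (intro continuous_intros f_cont) force

lemma optical_time_has_real_derivative_within:
  "x \<in> {c..d} \<Longrightarrow> (optical_time f c has_real_derivative 1 / f x) (at x within {c..d})"
  unfolding optical_time_def[abs_def] by (rule integral_has_real_derivative[OF continuous_on_inverse_speed])

lemma optical_time_has_real_derivative:
  "x \<in> {c<..<d} \<Longrightarrow> (optical_time f c has_real_derivative 1 / f x) (at x)"
  using optical_time_has_real_derivative_within[of x] at_within_interior[of x "{c..d}"] by simp

lemma optical_time_lipschitz: "\<exists>M. M-lipschitz_on {c..d} (optical_time f c)"
proof -
  obtain B where B: "\<forall>y \<in> (\<lambda>s. 1 / f s) ` {c..d}. norm y \<le> B"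
    using compact_imp_bounded[OF compact_continuous_image[OF continuous_on_inverse_speed compact_Icc]]
    unfolding bounded_iff by blast
  have "norm (optical_time f c x - optical_time f c y) \<le> max 0 B * norm (x - y)"
    if "x \<in> {c..d}" "y \<in> {c..d}" for x y
  proof (rule field_differentiable_bound[where S = "{c..d}"])
    show "(optical_time f c has_field_derivative 1 / f z) (at z within {c..d})" if "z \<in> {c..d}" for z
      using optical_time_has_real_derivative_within[OF that] .
    show "norm (1 / f z) \<le> max 0 B" if "z \<in> {c..d}" for z
      using B that by force
  qed (use that in auto)
  then show ?thesis
    by (intro exI lipschitz_onI) (auto simp: dist_norm)
qed

lemma optical_time_mono:
  assumes "x \<in> {c..d}" "y \<in> {c..d}" "x \<le> y"
  shows "optical_time f c x \<le> optical_time f c y"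
  unfolding optical_time_def
proof (rule integral_subset_le)
  show "(\<lambda>s. 1 / f s) integrable_on {c..x}" "(\<lambda>s. 1 / f s) integrable_on {c..y}"
    using assms by (auto intro!: integrable_continuous_real continuous_on_subset[OF continuous_on_inverse_speed])
  show "\<forall>s\<in>{c..y}. 0 \<le> 1 / f s"
    using assms f_pos by (auto simp: less_imp_le)
qed (use assms in auto)

end

lemma causal_le_fst_le:
  assumes "causal_le I f p r"
  shows "fst p \<le> fst r"
  using assms unfolding causal_le_def
proof (elim disjE exE conjE)
  fix \<gamma> a b assume "causal_curve I f \<gamma> a b" "future_directed \<gamma> a b" "\<gamma> a = p" "\<gamma> b = r"
  with future_directed_strict_mono[of I f \<gamma> a b] causal_curveD(1)[of I f \<gamma> a b] show ?thesis
    by (auto dest: strict_mono_onD[of _ _ a b])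
qed simp

lemma causal_le_dist_le:
  fixes p r :: "real \<times> 'a::metric_space"
  assumes le: "causal_le I f p r" and f: "continuous_on I f" "\<forall>t\<in>I. f t > 0"
    and cd: "{c..d} \<subseteq> I" "c \<le> fst p" "fst r \<le> d"
  shows "dist (snd p) (snd r) \<le> optical_time f c (fst r) - optical_time f c (fst p)"
  using le unfolding causal_le_def
proof (elim disjE exE conjE)
  fix \<gamma> a b assume causal: "causal_curve I f \<gamma> a b" and fd: "future_directed \<gamma> a b"
    and ends: "\<gamma> a = p" "\<gamma> b = r"
  have f_cd: "continuous_on {c..d} f" "\<And>x. x \<in> {c..d} \<Longrightarrow> f x > 0"
    using f cd(1) continuous_on_subset by blast+
  have mono: "strict_mono_on {a..b} (\<lambda>t. fst (\<gamma> t))"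
    by (rule future_directed_strict_mono[OF causal fd])
  have range: "fst (\<gamma> t) \<in> {c..d}" if "t \<in> {a..b}" for t
    using strict_mono_on_leD[OF mono, of a t] strict_mono_on_leD[OF mono, of t b] that cd ends by auto
  have range_open: "fst (\<gamma> t) \<in> {c<..<d}" if "t \<in> {a<..<b}" for t
    using strict_mono_onD[OF mono, of a t] strict_mono_onD[OF mono, of t b] that cd ends by auto
  obtain M where "M-lipschitz_on {c..d} (optical_time f c)"
    using optical_time_lipschitz[OF f_cd] by blast
  then have "M-lipschitz_on (fst ` \<gamma> ` {a..b}) (optical_time f c)"
    by (rule lipschitz_on_subset) (use range in auto)
  from causal_curve_dist_le[OF causal f(2), of 1, OF _ _ this]
  show ?thesis
    using mono range_open optical_time_has_real_derivative[OF f_cd] causal_curveD(1)[OF causal] ends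
    by fastforce
qed simp

lemma has_metric_derivative_constant_speed_comp:
  fixes \<sigma> :: "real \<Rightarrow> 'a::metric_space"
  assumes speed: "\<And>l m. l \<in> S \<Longrightarrow> m \<in> S \<Longrightarrow> dist (\<sigma> l) (\<sigma> m) = \<bar>l - m\<bar> * L"
    and \<phi>: "(\<phi> has_real_derivative D) (at t)"
    and in_S: "eventually (\<lambda>s. \<phi> s \<in> S) (at t)" "\<phi> t \<in> S"
  shows "has_metric_derivative (\<lambda>s. \<sigma> (\<phi> s)) (\<bar>D\<bar> * L) t"
proof -
  have "eventually (\<lambda>s. \<bar>(\<phi> s - \<phi> t) / (s - t)\<bar> * L = dist (\<sigma> (\<phi> s)) (\<sigma> (\<phi> t)) / \<bar>s - t\<bar>) (at t)"
    using in_S(1) by eventually_elim (simp add: speed[OF _ in_S(2)] abs_divide)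
  moreover have "((\<lambda>s. \<bar>(\<phi> s - \<phi> t) / (s - t)\<bar> * L) \<longlongrightarrow> \<bar>D\<bar> * L) (at t)"
    using \<phi> unfolding has_field_derivative_iff by (intro tendsto_intros)
  ultimately show ?thesis
    unfolding has_metric_derivative_def by (rule tendsto_cong[THEN iffD1])
qed

lemma causal_curve_graph:
  fixes \<beta> :: "real \<Rightarrow> 'a::metric_space"
  assumes "s0 < s1" "{s0..s1} \<subseteq> I" and pos: "\<forall>t\<in>I. f t > 0"
    and \<beta>: "abs_cont_metric dist \<beta> s0 s1"
    and speed: "\<And>t. t \<in> {s0<..<s1} \<Longrightarrow> \<exists>v. has_metric_derivative \<beta> v t \<and> f t * v \<le> 1"
  shows "causal_curve I f (\<lambda>t. (t, \<beta> t)) s0 s1 \<and> future_directed (\<lambda>t. (t, \<beta> t)) s0 s1"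
proof -
  have comp: "fst \<circ> (\<lambda>t. (t, \<beta> t)) = (\<lambda>t. t)" "snd \<circ> (\<lambda>t. (t, \<beta> t)) = \<beta>"
    by (simp_all add: fun_eq_iff)
  have "abs_cont_metric cone_dist (\<lambda>t. (t, \<beta> t)) s0 s1"
    by (rule abs_cont_metric_dominated[OF abs_cont_metric_ident \<beta>]) (simp add: cone_dist_def dist_real_def)
  moreover have "(\<lambda>t. (t, \<beta> t)) ` {s0..s1} \<subseteq> cone_space I"
    using assms(2) by (auto simp: cone_space_def)
  moreover have "strict_mono_on {s0..s1} (\<lambda>t. t)"
    by (rule strict_mono_onI) simp
  moreover have "AE t in lebesgue. t \<notin> {s0, s1}"
    by (rule AE_not_in) (simp flip: negligible_iff_null_sets)
  then have "AE t in lebesgue. t \<in> {s0..s1} \<longrightarrow> (\<exists>da v. ((\<lambda>t. t) has_real_derivative da) (at t) \<and>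
      has_metric_derivative \<beta> v t \<and> - (da\<^sup>2) + (f t)\<^sup>2 * v\<^sup>2 \<le> 0)"
  proof eventually_elim
    case (elim t)
    show ?case
    proof
      assume "t \<in> {s0..s1}"
      with elim have t: "t \<in> {s0<..<s1}" by auto
      then obtain v where v: "has_metric_derivative \<beta> v t" "f t * v \<le> 1"
        using speed by blast
      have "t \<in> I"
        using assms(2) t by auto
      with pos have "f t > 0"
        by blast
      then have "0 \<le> f t * v"
        using has_metric_derivative_nonneg[OF v(1)] by simp
      with v(2) have "(f t * v)\<^sup>2 \<le> 1\<^sup>2"
        by (intro power_mono)
      with v(1) show "\<exists>da v. ((\<lambda>t. t) has_real_derivative da) (at t) \<and>
          has_metric_derivative \<beta> v t \<and> - (da\<^sup>2) + (f t)\<^sup>2 * v\<^sup>2 \<le> 0"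
        by (intro exI[of _ 1] exI[of _ v]) (auto simp: power_mult_distrib)
    qed
  qed
  ultimately have "causal_curve I f (\<lambda>t. (t, \<beta> t)) s0 s1"
    unfolding causal_curve_def comp using \<open>s0 < s1\<close> by auto
  moreover have "future_directed (\<lambda>t. (t, \<beta> t)) s0 s1"
    unfolding future_directed_def comp by (auto intro!: AE_I2 exI[of _ 1] DERIV_ident)
  ultimately show ?thesis ..
qed

lemma causal_curve_graph_constant_speed_comp:
  fixes \<sigma> :: "real \<Rightarrow> 'a::metric_space"
  assumes "s0 < s1" "{s0..s1} \<subseteq> I" "\<forall>t\<in>I. f t > 0"
    and \<sigma>: "\<And>l m. l \<in> {0..1} \<Longrightarrow> m \<in> {0..1} \<Longrightarrow> dist (\<sigma> l) (\<sigma> m) = \<bar>l - m\<bar> * L" "0 \<le> L"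
    and \<phi>_01: "\<And>\<tau>. \<tau> \<in> {s0..s1} \<Longrightarrow> \<phi> \<tau> \<in> {0..1}" and \<phi>: "K-lipschitz_on {s0..s1} \<phi>"
    and \<phi>': "\<And>t. t \<in> {s0<..<s1} \<Longrightarrow> (\<phi> has_real_derivative \<phi>' t) (at t) \<and> f t * (\<bar>\<phi>' t\<bar> * L) \<le> 1"
  shows "causal_curve I f (\<lambda>\<tau>. (\<tau>, \<sigma> (\<phi> \<tau>))) s0 s1 \<and> future_directed (\<lambda>\<tau>. (\<tau>, \<sigma> (\<phi> \<tau>))) s0 s1"
proof (rule causal_curve_graph[OF assms(1-3)])
  show "abs_cont_metric dist (\<lambda>\<tau>. \<sigma> (\<phi> \<tau>)) s0 s1"
  proof (rule abs_cont_metric_transfer[OF abs_cont_metric_ident order_refl order_refl])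
    show "0 \<le> L * K"
      using \<sigma>(2) lipschitz_on_nonneg[OF \<phi>] by simp
    fix u w assume uw: "u \<in> {s0..s1}" "w \<in> {s0..s1}"
    have "\<bar>\<phi> u - \<phi> w\<bar> * L \<le> K * dist u w * L"
      using lipschitz_onD[OF \<phi> uw] \<sigma>(2) by (intro mult_right_mono) (simp_all add: dist_real_def)
    then show "dist (\<sigma> (\<phi> u)) (\<sigma> (\<phi> w)) \<le> L * K * dist u w"
      using \<sigma>(1)[OF \<phi>_01[OF uw(1)] \<phi>_01[OF uw(2)]] by (simp add: ac_simps)
  qed
  fix t assume t: "t \<in> {s0<..<s1}"
  have "eventually (\<lambda>s. s \<in> {s0<..<s1}) (at t)"
    using t by (intro eventually_at_in_open') auto
  then have ev: "eventually (\<lambda>s. \<phi> s \<in> {0..1}) (at t)"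
    by eventually_elim (use \<phi>_01 in force)
  have "has_metric_derivative (\<lambda>\<tau>. \<sigma> (\<phi> \<tau>)) (\<bar>\<phi>' t\<bar> * L) t"
  proof (rule has_metric_derivative_constant_speed_comp[where S = "{0..1}"])
    show "dist (\<sigma> l) (\<sigma> m) = \<bar>l - m\<bar> * L" if "l \<in> {0..1}" "m \<in> {0..1}" for l m
      using \<sigma>(1) that .
  qed (use \<phi>'[OF t] ev \<phi>_01[of t] t in auto)
  with \<phi>'[OF t] show "\<exists>v. has_metric_derivative (\<lambda>\<tau>. \<sigma> (\<phi> \<tau>)) v t \<and> f t * v \<le> 1"
    by blast
qed

lemma causal_le_along_geodesic:
  fixes \<sigma> :: "real \<Rightarrow> 'a::metric_space"
  assumes f: "continuous_on I f" "\<forall>t\<in>I. f t > 0"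
    and cd: "{c..d} \<subseteq> I" "c \<le> s0" "s0 < s1" "s1 \<le> d"
    and \<sigma>: "\<And>l m. l \<in> {0..1} \<Longrightarrow> m \<in> {0..1} \<Longrightarrow> dist (\<sigma> l) (\<sigma> m) = \<bar>l - m\<bar> * L"
    and L: "L \<le> optical_time f c s1 - optical_time f c s0"
  shows "causal_le I f (s0, \<sigma> 0) (s1, \<sigma> 1)"
proof -
  have f_cd: "continuous_on {c..d} f" "\<And>x. x \<in> {c..d} \<Longrightarrow> f x > 0"
    using f cd(1) continuous_on_subset by blast+
  define F where "F = optical_time f c"
  define \<Delta> where "\<Delta> = F s1 - F s0"
  have "0 \<le> L" "L \<le> \<Delta>"
    using \<sigma>[of 0 1] L unfolding \<Delta>_def F_def by (auto intro: order_trans[OF zero_le_dist])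
  obtain M where M: "M-lipschitz_on {c..d} F"
    using optical_time_lipschitz[OF f_cd] unfolding F_def by blast
  text \<open>Run along the geodesic at the speed of light, that is, reparametrised by optical time.\<close>
  define \<phi> where "\<phi> \<tau> = (F \<tau> - F s0) / \<Delta>" for \<tau>
  have "causal_curve I f (\<lambda>\<tau>. (\<tau>, \<sigma> (\<phi> \<tau>))) s0 s1 \<and> future_directed (\<lambda>\<tau>. (\<tau>, \<sigma> (\<phi> \<tau>))) s0 s1"
  proof (rule causal_curve_graph_constant_speed_comp[OF \<open>s0 < s1\<close> _ f(2) \<sigma> \<open>0 \<le> L\<close>])
    show "{s0..s1} \<subseteq> I"
      using cd by auto
    show "\<phi> \<tau> \<in> {0..1}" if "\<tau> \<in> {s0..s1}" for \<tau>
      using optical_time_mono[OF f_cd, of s0 \<tau>] optical_time_mono[OF f_cd, of \<tau> s1] that cd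
      unfolding \<phi>_def \<Delta>_def F_def by (auto simp: divide_le_eq_1)
    show "(M / \<Delta>)-lipschitz_on {s0..s1} \<phi>"
    proof (rule lipschitz_onI)
      fix u w assume "u \<in> {s0..s1}" "w \<in> {s0..s1}"
      then have "\<bar>F u - F w\<bar> \<le> M * \<bar>u - w\<bar>"
        using lipschitz_onD[OF M, of u w] cd by (simp add: dist_real_def)
      with \<open>0 \<le> L\<close> \<open>L \<le> \<Delta>\<close> show "dist (\<phi> u) (\<phi> w) \<le> M / \<Delta> * dist u w"
        unfolding \<phi>_def dist_real_def
        by (simp add: diff_divide_distrib[symmetric] abs_divide divide_right_mono)
    qed (use \<open>0 \<le> L\<close> \<open>L \<le> \<Delta>\<close> lipschitz_on_nonneg[OF M] in simp)
    fix t assume "t \<in> {s0<..<s1}"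
    then have t: "t \<in> {c<..<d}"
      using cd by auto
    have "((\<lambda>\<tau>. F \<tau> - F s0) has_real_derivative 1 / f t - 0) (at t)"
      unfolding F_def by (intro DERIV_diff optical_time_has_real_derivative[OF f_cd t] DERIV_const)
    then have "(\<phi> has_real_derivative (1 / f t) / \<Delta>) (at t)"
      unfolding \<phi>_def by (intro DERIV_cdivide) simp
    moreover have "f t * (\<bar>(1 / f t) / \<Delta>\<bar> * L) \<le> 1"
      using f_cd(2)[of t] t \<open>0 \<le> L\<close> \<open>L \<le> \<Delta>\<close> by (simp add: abs_divide divide_le_eq_1, linarith)
    ultimately show "(\<phi> has_real_derivative (1 / f t) / \<Delta>) (at t) \<and> f t * (\<bar>(1 / f t) / \<Delta>\<bar> * L) \<le> 1"
      by blast
  qed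
  moreover have "\<sigma> (\<phi> s1) = \<sigma> 1"
  proof (cases "\<Delta> = 0")
    case True
    with \<open>0 \<le> L\<close> \<open>L \<le> \<Delta>\<close> \<sigma>[of 0 1] show ?thesis
      unfolding \<phi>_def by simp
  next
    case False
    then show ?thesis
      unfolding \<phi>_def \<Delta>_def by simp
  qed
  ultimately show ?thesis
    unfolding causal_le_def
    by (intro disjI2 exI[of _ "\<lambda>\<tau>. (\<tau>, \<sigma> (\<phi> \<tau>))"] exI[of _ s0] exI[of _ s1]) (auto simp: \<phi>_def)
qed

lemma causal_le_of_dist_le:
  fixes p r :: "real \<times> 'a::metric_space"
  assumes geo: "geodesic_space TYPE('a)" and f: "continuous_on I f" "\<forall>t\<in>I. f t > 0"
    and cd: "{c..d} \<subseteq> I" "c \<le> fst p" "fst p \<le> fst r" "fst r \<le> d"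
    and dist: "dist (snd p) (snd r) \<le> optical_time f c (fst r) - optical_time f c (fst p)"
  shows "causal_le I f p r"
proof (cases "fst p = fst r")
  case True
  with dist have "p = r"
    by (simp add: prod_eq_iff)
  moreover have "p \<in> cone_space I"
    using cd by (auto simp: cone_space_def mem_Times_iff)
  ultimately show ?thesis
    unfolding causal_le_def by simp
next
  case False
  obtain \<sigma> :: "real \<Rightarrow> 'a" where \<sigma>: "\<sigma> 0 = snd p" "\<sigma> 1 = snd r"
    "\<And>l m. l \<in> {0..1} \<Longrightarrow> m \<in> {0..1} \<Longrightarrow> dist (\<sigma> l) (\<sigma> m) = \<bar>l - m\<bar> * dist (snd p) (snd r)"
    using geodesic_space_constant_speed[OF geo] by blast
  from False cd(3) have "fst p < fst r"
    by simp
  from causal_le_along_geodesic[OF f cd(1,2) this cd(4) \<sigma>(3) dist] show ?thesis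
    using \<sigma>(1,2) by simp
qed

section \<open>Global hyperbolicity\<close>

lemma causal_diamond_eq:
  fixes p q :: "real \<times> 'a::metric_space"
  assumes geo: "geodesic_space TYPE('a)" and f: "continuous_on I f" "\<forall>t\<in>I. f t > 0"
    and "is_interval I" "p \<in> cone_space I" "q \<in> cone_space I"
  defines "F \<equiv> optical_time f (fst p)"
  shows "causal_diamond I f p q = {r. fst r \<in> {fst p..fst q} \<and>
     dist (snd p) (snd r) \<le> F (fst r) - F (fst p) \<and> dist (snd r) (snd q) \<le> F (fst q) - F (fst r)}"
proof -
  have sub: "{fst p..fst q} \<subseteq> I"
    using interval_subset_is_interval[OF \<open>is_interval I\<close>, of "fst p" "fst q"] assms(5,6)
    by (simp add: cone_space_def mem_Times_iff)
  show ?thesis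
    unfolding causal_diamond_def F_def
  proof (intro Collect_cong iffI conjI)
    fix r assume "causal_le I f p r \<and> causal_le I f r q"
    then have le: "causal_le I f p r" "causal_le I f r q" by simp_all
    show r: "fst r \<in> {fst p..fst q}"
      using causal_le_fst_le[OF le(1)] causal_le_fst_le[OF le(2)] by simp
    show "dist (snd p) (snd r) \<le> optical_time f (fst p) (fst r) - optical_time f (fst p) (fst p)"
      using r by (intro causal_le_dist_le[OF le(1) f sub]) auto
    show "dist (snd r) (snd q) \<le> optical_time f (fst p) (fst q) - optical_time f (fst p) (fst r)"
      using r by (intro causal_le_dist_le[OF le(2) f sub]) auto
  next
    fix r assume r: "fst r \<in> {fst p..fst q} \<and>
      dist (snd p) (snd r) \<le> optical_time f (fst p) (fst r) - optical_time f (fst p) (fst p) \<and>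
      dist (snd r) (snd q) \<le> optical_time f (fst p) (fst q) - optical_time f (fst p) (fst r)"
    show "causal_le I f p r"
      using r by (intro causal_le_of_dist_le[OF geo f sub]) auto
    show "causal_le I f r q"
      using r by (intro causal_le_of_dist_le[OF geo f sub]) auto
  qed
qed

lemma causal_diamond_compact:
  fixes p q :: "real \<times> 'a::metric_space"
  assumes geo: "geodesic_space TYPE('a)" and proper: "proper_metric_space TYPE('a)"
    and f: "continuous_on I f" "\<forall>t\<in>I. f t > 0"
    and I: "is_interval I" and pq: "p \<in> cone_space I" "q \<in> cone_space I"
  shows "compactin (cone_topology I) (causal_diamond I f p q)"
proof -
  define c d where "c = fst p" and "d = fst q"
  define F where "F = optical_time f c"
  have sub: "{c..d} \<subseteq> I"
    using interval_subset_is_interval[OF I, of c d] pq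
    unfolding c_def d_def by (simp add: cone_space_def mem_Times_iff)
  have f_cd: "continuous_on {c..d} f" "\<And>x. x \<in> {c..d} \<Longrightarrow> f x > 0"
    using f sub continuous_on_subset by blast+
  obtain M where "M-lipschitz_on {c..d} F"
    using optical_time_lipschitz[OF f_cd] unfolding F_def by blast
  then have F_cont: "continuous_on {c..d} F"
    by (rule lipschitz_on_continuous_on)
  define slack where "slack r = min (F (fst r) - F c - dist (snd p) (snd r)) (F d - F (fst r) - dist (snd r) (snd q))"
    for r :: "real \<times> 'a"
  define T where "T = {c..d} \<times> (UNIV :: 'a set)"
  have J_eq: "causal_diamond I f p q = T \<inter> slack -` {0..}"
    unfolding causal_diamond_eq[OF geo f I pq] T_def slack_def F_def c_def d_def
    by (auto simp: mem_Times_iff)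
  have "continuous_on T slack"
    unfolding slack_def T_def
    by (intro continuous_intros continuous_on_compose2[OF F_cont]) (auto simp: mem_Times_iff)
  then have "closed (causal_diamond I f p q)"
    unfolding J_eq by (rule continuous_closed_preimage) (auto simp: T_def intro: closed_Times)
  moreover have "causal_diamond I f p q \<subseteq> {c..d} \<times> cball (snd p) (F d - F c)"
  proof
    fix r assume "r \<in> causal_diamond I f p q"
    then have "fst r \<in> {c..d}" "dist (snd p) (snd r) \<le> F (fst r) - F c"
      unfolding J_eq T_def slack_def by (auto simp: mem_Times_iff)
    moreover have "F (fst r) \<le> F d"
      using optical_time_mono[OF f_cd] \<open>fst r \<in> {c..d}\<close> unfolding F_def by auto
    ultimately show "r \<in> {c..d} \<times> cball (snd p) (F d - F c)"
      by (auto simp: mem_Times_iff)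
  qed
  moreover have "compact ({c..d} \<times> cball (snd p) (F d - F c))"
    using proper unfolding proper_metric_space_def by (intro compact_Times) auto
  ultimately have "compact (causal_diamond I f p q)"
    by (metis compact_Int_closed inf.absorb_iff2)
  moreover have "causal_diamond I f p q \<subseteq> cone_space I"
    using sub unfolding J_eq T_def cone_space_def by auto
  ultimately show ?thesis
    by (simp add: compactin_cone_topology)
qed

lemma causal_curve_length_le:
  fixes \<gamma> :: "real \<Rightarrow> real \<times> 'a::metric_space"
  assumes causal: "causal_curve I f \<gamma> a b" and pos: "\<forall>t\<in>I. f t > 0"
    and "m > 0" and m: "\<And>u. u \<in> {a..b} \<Longrightarrow> m \<le> f (fst (\<gamma> u))"
  shows "curve_length cone_dist \<gamma> a b \<le> ereal ((1 + 1 / m) * \<bar>fst (\<gamma> b) - fst (\<gamma> a)\<bar>)"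
proof -
  obtain \<sigma> where \<sigma>: "\<sigma> = 1 \<or> \<sigma> = -1" "strict_mono_on {a..b} (\<lambda>t. \<sigma> * fst (\<gamma> t))"
    using causal_curve_orientation[OF causal] .
  define h where "h u = (1 + 1 / m) * (\<sigma> * fst (\<gamma> u))" for u
  have "curve_length cone_dist \<gamma> a b \<le> ereal (h b - h a)"
  proof (rule curve_length_le_of_increment_le)
    fix u w assume uw: "a \<le> u" "u \<le> w" "w \<le> b"
    have "dist (\<sigma> * x / m) (\<sigma> * y / m) = 1 / m * dist x y" for x y
    proof -
      have "\<sigma> * x / m - \<sigma> * y / m = \<sigma> * (x - y) / m"
        by (simp add: algebra_simps diff_divide_distrib)
      with \<sigma>(1) \<open>m > 0\<close> show ?thesis
        by (auto simp: dist_real_def abs_mult abs_divide)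
    qed
    then have "(1 / m)-lipschitz_on (fst ` \<gamma> ` {a..b}) (\<lambda>x. \<sigma> * x / m)"
      using \<open>m > 0\<close> by (intro lipschitz_onI) simp_all
    then have "dist (snd (\<gamma> u)) (snd (\<gamma> w)) \<le> \<sigma> * fst (\<gamma> w) / m - \<sigma> * fst (\<gamma> u) / m"
    proof (rule causal_curve_dist_le[OF causal pos \<sigma>])
      fix t assume "t \<in> {a<..<b}"
      then have "1 / f (fst (\<gamma> t)) \<le> 1 / m"
        using m[of t] \<open>m > 0\<close> by (intro frac_le) auto
      also have "\<dots> = \<sigma> * (\<sigma> / m)"
        using \<sigma>(1) \<open>m > 0\<close> by auto
      finally have "1 / f (fst (\<gamma> t)) \<le> \<sigma> * (\<sigma> / m)" .
      moreover have "((\<lambda>x. \<sigma> * x / m) has_real_derivative \<sigma> / m) (at (fst (\<gamma> t)))"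
        using \<open>m > 0\<close> by (auto intro!: derivative_eq_intros)
      ultimately show "\<exists>D. ((\<lambda>x. \<sigma> * x / m) has_real_derivative D) (at (fst (\<gamma> t))) \<and>
          1 / f (fst (\<gamma> t)) \<le> \<sigma> * D"
        by blast
    qed (use uw in auto)
    moreover have "\<bar>fst (\<gamma> u) - fst (\<gamma> w)\<bar> = \<sigma> * fst (\<gamma> w) - \<sigma> * fst (\<gamma> u)"
      using strict_mono_on_leD[OF \<sigma>(2), of u w] \<sigma>(1) uw by auto
    ultimately show "cone_dist (\<gamma> u) (\<gamma> w) \<le> h w - h u"
      unfolding cone_dist_def h_def by (simp add: algebra_simps add_divide_distrib)
  qed
  also have "h b - h a \<le> (1 + 1 / m) * \<bar>fst (\<gamma> b) - fst (\<gamma> a)\<bar>"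
    unfolding h_def right_diff_distrib[symmetric] using \<sigma>(1) \<open>m > 0\<close>
    by (intro mult_left_mono) (auto simp: algebra_simps)
  finally show ?thesis
    by simp
qed

lemma compact_pos_lower_bound:
  fixes f :: "real \<Rightarrow> real"
  assumes "compact S" "S \<subseteq> I" "continuous_on I f" "\<forall>t\<in>I. f t > 0"
  obtains m where "m > 0" "\<And>x. x \<in> S \<Longrightarrow> m \<le> f x"
proof (cases "S = {}")
  case False
  then obtain x0 where "x0 \<in> S" "\<And>x. x \<in> S \<Longrightarrow> f x0 \<le> f x"
    using continuous_attains_inf[OF assms(1) _ continuous_on_subset[OF assms(3,2)]] by blast
  with assms(2,4) that[of "f x0"] show thesis by blast
qed (use that[of 1] in simp)

lemma non_totally_imprisoning_cone:
  assumes f: "continuous_on I f" "\<forall>t\<in>I. f t > 0"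
  shows "non_totally_imprisoning I f TYPE('a::metric_space)"
  unfolding non_totally_imprisoning_def
proof (intro allI impI)
  fix K :: "(real \<times> 'a) set"
  assume "compactin (cone_topology I) K"
  then have "compact K" "K \<subseteq> cone_space I"
    by (simp_all add: compactin_cone_topology)
  then have "compact (fst ` K)" "fst ` K \<subseteq> I"
    by (auto simp: cone_space_def mem_Times_iff intro!: compact_continuous_image continuous_intros)
  then obtain m where "m > 0" and m: "\<And>x. x \<in> fst ` K \<Longrightarrow> m \<le> f x"
    using compact_pos_lower_bound f by metis
  obtain B where "B > 0" and B: "\<And>x. x \<in> fst ` K \<Longrightarrow> \<bar>x\<bar> \<le> B"
    using compact_imp_bounded[OF \<open>compact (fst ` K)\<close>] unfolding bounded_pos by auto
  have "curve_length cone_dist \<gamma> a b \<le> ereal ((1 + 1 / m) * (2 * B))"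
    if "causal_curve I f \<gamma> a b \<and> \<gamma> ` {a..b} \<subseteq> K" for \<gamma> a b
  proof -
    have "m \<le> f (fst (\<gamma> u))" if "u \<in> {a..b}" for u
    proof (rule m)
      show "fst (\<gamma> u) \<in> fst ` K"
        using that \<open>causal_curve I f \<gamma> a b \<and> \<gamma> ` {a..b} \<subseteq> K\<close> by blast
    qed
    then have "curve_length cone_dist \<gamma> a b \<le> ereal ((1 + 1 / m) * \<bar>fst (\<gamma> b) - fst (\<gamma> a)\<bar>)"
      using that \<open>m > 0\<close> by (intro causal_curve_length_le[OF _ f(2)]) auto
    also have "\<dots> \<le> ereal ((1 + 1 / m) * (2 * B))"
    proof -
      have "\<gamma> a \<in> K" "\<gamma> b \<in> K"
        using that causal_curveD(1)[of I f \<gamma> a b] by auto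
      then have "\<bar>fst (\<gamma> a)\<bar> \<le> B" "\<bar>fst (\<gamma> b)\<bar> \<le> B"
        using B by auto
      with \<open>m > 0\<close> show ?thesis
        unfolding ereal_less_eq(3) by (intro mult_left_mono) auto
    qed
    finally show ?thesis .
  qed
  moreover have "(1 + 1 / m) * (2 * B) > 0"
    using \<open>m > 0\<close> \<open>B > 0\<close> by (simp add: add_pos_pos)
  ultimately show "\<exists>C>0. \<forall>\<gamma> a b. causal_curve I f \<gamma> a b \<and> \<gamma> ` {a..b} \<subseteq> K \<longrightarrow>
      curve_length cone_dist \<gamma> a b \<le> ereal C"
    by blast
qed

theorem proposition4p10:
  fixes I :: "real set" and f :: "real \<Rightarrow> real"
  assumes "geodesic_space TYPE('a::metric_space)"
      and "length_space TYPE('a)"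
      and "proper_metric_space TYPE('a)"
      and "is_interval I" and "open I" and "I \<noteq> {}"
      and "continuous_on I f" and "\<forall>t\<in>I. f t > 0"
  shows "globally_hyperbolic I f TYPE('a)"
  unfolding globally_hyperbolic_def
  using non_totally_imprisoning_cone[OF assms(7,8)] causal_diamond_compact[OF assms(1,3,7,8,4)]
  by blast

end
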